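(* Let $X$ be a topological space, $Y$ a topological space, $(Z,d)$ a metric space and $f:X\times Y\to Z$ a mapping. (a) If $Y$ has a countable base and, for each $x\in X$, $f_x$ is continuous and there is a dense set $D_x\subset Y$ such that $f^y$ is quasicontinuous at $x$ for every $y\in D_x$, then there is a residual set $R\subset X$ such that $f$ is continuous at every point of $R\times Y$. (b) If $Y$ has a countable pseudobase and, for each $x\in X$, $f_x$ is quasicontinuous and there is a dense set $D_x\subset Y$ such that $f^y$ is quasicontinuous at $x$ for every $y\in D_x$, then there is a residual set $R\subset X$ such that $f$ is quasicontinuous with respect to the variable $x$ at every point of $R\times Y$.
   Context: $f_x(y)=f^y(x)=f(x,y)$. A mapping $g$ is quasicontinuous at $a$ if for each neighborhood $U$ of $a$ and neighborhood $W$ of $g(a)$ there is an open $O$ with $\emptyset\ne O\subset U$ and $g(O)\subset W$; quasicontinuous means at every point. $f$ is quasicontinuous with respect to the variable $x$ at $(a,b)$ if for each neighborhood $V$ of $b$ and $\varepsilon>0$ there are a neighborhood $U$ of $a$ and an open $O\subset Y$ with $\emptyset\ne O\subset V$ and $d(f(a,b),f(x,y))\le\varepsilon$ for all $x\in U$, $y\in O$. A pseudobase of $Y$ is a collection of nonempty open sets such that every nonempty open set contains one of them. Residual means containing a countable intersection of dense open sets. *)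

theory Defs
  imports "HOL-Analysis.Analysis"
begin

definition quasicont_at :: "('a::topological_space \<Rightarrow> 'b::topological_space) \<Rightarrow> 'a \<Rightarrow> bool" where
  "quasicont_at g a \<longleftrightarrow>
     (\<forall>U W. open U \<and> a \<in> U \<and> open W \<and> g a \<in> W \<longrightarrow>
        (\<exists>Q. open Q \<and> Q \<noteq> {} \<and> Q \<subseteq> U \<and> g ` Q \<subseteq> W))"

definition quasicont :: "('a::topological_space \<Rightarrow> 'b::topological_space) \<Rightarrow> bool" where
  "quasicont g \<longleftrightarrow> (\<forall>a. quasicont_at g a)"

definition quasicont_wrt_x ::
  "('a::topological_space \<times> 'b::topological_space \<Rightarrow> 'c::metric_space) \<Rightarrow> 'a \<Rightarrow> 'b \<Rightarrow> bool" where
  "quasicont_wrt_x f a b \<longleftrightarrow>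
     (\<forall>V \<epsilon>. open V \<and> b \<in> V \<and> \<epsilon> > 0 \<longrightarrow>
        (\<exists>U Q. open U \<and> a \<in> U \<and> open Q \<and> Q \<noteq> {} \<and> Q \<subseteq> V \<and>
               (\<forall>x\<in>U. \<forall>y\<in>Q. dist (f (a, b)) (f (x, y)) \<le> \<epsilon>)))"

definition pseudobase :: "'a::topological_space set set \<Rightarrow> bool" where
  "pseudobase P \<longleftrightarrow> (\<forall>p\<in>P. open p \<and> p \<noteq> {}) \<and>
     (\<forall>S. open S \<and> S \<noteq> {} \<longrightarrow> (\<exists>p\<in>P. p \<subseteq> S))"

definition dense_set :: "'a::topological_space set \<Rightarrow> bool" where
  "dense_set D \<longleftrightarrow> closure D = UNIV"

definition residual :: "'a::topological_space set \<Rightarrow> bool" where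
  "residual R \<longleftrightarrow> (\<exists>\<G>. countable \<G> \<and> (\<forall>G\<in>\<G>. open G \<and> dense_set G) \<and> \<Inter>\<G> \<subseteq> R)"

end

theory Submission
  imports Defs
begin

(* For an open set p of Y and e > 0 call
   "fibre small" the points x at which f(x,.) oscillates by at most e on p, and
   "locally small" those x having a neighbourhood U with f oscillating by at most e
   on U \<times> p.  The key fact is that every set
       locally_small f p e \<union> - closure (fibre_small f p (e/4))
   is open and dense in X: on an open set W inside the closure of the fibre-small
   points, quasicontinuity of f^y at a point x0 \<in> W (for a y in the dense set D_x0)
   gives an open Q \<subseteq> W controlled near f(x0,y), and quasicontinuity in both
   variables propagates this control from the fibre-small points of Q to all of Q.
   Intersecting these sets over p in a countable family P of open sets and over
   rational e > 0 gives a residual R on which "fibre small" implies "locally small".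
   Part (a) applies this with P a countable base (continuous fibres are quasicontinuous),
   part (b) with P a countable pseudobase; the theorem combines both. *)

definition small_on ::
  "('a \<times> 'b \<Rightarrow> 'c::metric_space) \<Rightarrow> 'a set \<Rightarrow> 'b set \<Rightarrow> real \<Rightarrow> bool" where
  "small_on f U p e \<longleftrightarrow>
     (\<forall>x1\<in>U. \<forall>x2\<in>U. \<forall>z1\<in>p. \<forall>z2\<in>p. dist (f (x1, z1)) (f (x2, z2)) \<le> e)"

definition fibre_small :: "('a \<times> 'b \<Rightarrow> 'c::metric_space) \<Rightarrow> 'b set \<Rightarrow> real \<Rightarrow> 'a set" where
  "fibre_small f p e = {x. small_on f {x} p e}"

definition locally_small ::
  "('a::topological_space \<times> 'b \<Rightarrow> 'c::metric_space) \<Rightarrow> 'b set \<Rightarrow> real \<Rightarrow> 'a set" where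
  "locally_small f p e = {x. \<exists>U. open U \<and> x \<in> U \<and> small_on f U p e}"

text \<open>The open dense sets whose intersection is the residual set of the theorem.\<close>
definition good_set ::
  "('a::topological_space \<times> 'b \<Rightarrow> 'c::metric_space) \<Rightarrow> 'b set \<Rightarrow> real \<Rightarrow> 'a set" where
  "good_set f p e = locally_small f p e \<union> - closure (fibre_small f p (e/4))"

lemma small_on_centre:
  assumes "\<And>x z. x \<in> U \<Longrightarrow> z \<in> p \<Longrightarrow> dist (f (x, z)) c \<le> e/2"
  shows "small_on f U p e"
  unfolding small_on_def
proof (intro ballI)
  fix x1 x2 z1 z2 assume "x1 \<in> U" "x2 \<in> U" "z1 \<in> p" "z2 \<in> p"
  then have "dist (f (x1, z1)) c \<le> e/2" "dist (f (x2, z2)) c \<le> e/2" using assms by auto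
  then show "dist (f (x1, z1)) (f (x2, z2)) \<le> e"
    using dist_triangle2[of "f (x1, z1)" "f (x2, z2)" c] by linarith
qed

lemma small_on_mono: "small_on f U p e \<Longrightarrow> e \<le> e' \<Longrightarrow> small_on f U p e'"
  unfolding small_on_def by (meson order_trans)

lemma open_locally_small: "open (locally_small f p e)"
proof (subst open_subopen, intro ballI)
  fix x assume "x \<in> locally_small f p e"
  then obtain U where "open U" "x \<in> U" "small_on f U p e"
    unfolding locally_small_def by blast
  moreover from this have "U \<subseteq> locally_small f p e" unfolding locally_small_def by blast
  ultimately show "\<exists>T. open T \<and> x \<in> T \<and> T \<subseteq> locally_small f p e" by blast
qed

lemma open_good_set: "open (good_set f p e)"
  unfolding good_set_def by (intro open_Un open_locally_small) auto

lemma quasicont_atE: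
  assumes "quasicont_at g a" "open U" "a \<in> U" "e > 0"
  obtains Q where "open Q" "Q \<noteq> {}" "Q \<subseteq> U" "\<And>q. q \<in> Q \<Longrightarrow> dist (g q) (g a) < e"
proof -
  have "g a \<in> ball (g a) e" using assms(4) by simp
  then obtain Q where "open Q" "Q \<noteq> {}" "Q \<subseteq> U" "g ` Q \<subseteq> ball (g a) e"
    using assms(1-3) unfolding quasicont_at_def by (meson open_ball)
  then show thesis by (intro that[of Q]) (auto simp: dist_commute)
qed

lemma open_in_closure_meets:
  assumes "open S" "S \<noteq> {}" "S \<subseteq> closure A"
  obtains a where "a \<in> S" "a \<in> A"
  using assms open_Int_closure_eq_empty[of S A] by blast

lemma dense_set_meets:
  assumes "dense_set D" "open V" "V \<noteq> {}"
  obtains y where "y \<in> V" "y \<in> D"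
  using assms open_Int_closure_eq_empty[of V D] unfolding dense_set_def by blast

text \<open>A point (x,z) is approached by
  quasicontinuity of f(x,.) at z (reaching some y2 \<in> D_x) and then of f^y2 at x
  (reaching a point of A).\<close>
lemma bound_from_dense_part:
  fixes f :: "'a::topological_space \<times> 'b::topological_space \<Rightarrow> 'c::metric_space"
  assumes qf: "\<And>x. quasicont (\<lambda>y. f (x, y))"
    and dD: "\<And>x. dense_set (D x)"
    and qD: "\<And>x y. y \<in> D x \<Longrightarrow> quasicont_at (\<lambda>x'. f (x', y)) x"
    and p: "open p" and Q: "open Q" "Q \<subseteq> closure A"
    and bound: "\<And>x z. x \<in> Q \<Longrightarrow> x \<in> A \<Longrightarrow> z \<in> p \<Longrightarrow> dist (f (x, z)) c \<le> r"
    and x: "x \<in> Q" and z: "z \<in> p"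
  shows "dist (f (x, z)) c \<le> r"
proof (rule field_le_epsilon)
  fix t :: real assume "t > 0"
  then have t2: "t/2 > 0" by simp
  have "quasicont_at (\<lambda>y. f (x, y)) z" using qf unfolding quasicont_def by blast
  then obtain Q1 where Q1: "open Q1" "Q1 \<noteq> {}" "Q1 \<subseteq> p"
      "\<And>y. y \<in> Q1 \<Longrightarrow> dist (f (x, y)) (f (x, z)) < t/2"
    using p z t2 by (rule quasicont_atE) auto
  obtain y2 where y2: "y2 \<in> Q1" "y2 \<in> D x" using dense_set_meets[OF dD Q1(1,2)] by blast
  obtain Q2 where Q2: "open Q2" "Q2 \<noteq> {}" "Q2 \<subseteq> Q"
      "\<And>x'. x' \<in> Q2 \<Longrightarrow> dist (f (x', y2)) (f (x, y2)) < t/2"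
    using qD[OF y2(2)] Q(1) x t2 by (rule quasicont_atE) auto
  obtain x3 where x3: "x3 \<in> Q2" "x3 \<in> A"
    using open_in_closure_meets[OF Q2(1,2)] Q2(3) Q(2) by blast
  have "dist (f (x3, y2)) c \<le> r" using bound x3 Q2(3) y2(1) Q1(3) by blast
  moreover have "dist (f (x3, y2)) (f (x, y2)) < t/2" using Q2(4) x3(1) .
  moreover have "dist (f (x, y2)) (f (x, z)) < t/2" using Q1(4) y2(1) .
  ultimately show "dist (f (x, z)) c \<le> r + t"
    using dist_triangle3[of "f (x, z)" c "f (x, y2)"]
      dist_triangle3[of "f (x, y2)" c "f (x3, y2)"] by linarith
qed

text \<open>Every good set is dense: inside the closure of the fibre-small points, each
  nonempty open W contains an open Q on which f is small over p.\<close>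
lemma dense_good_set:
  fixes f :: "'a::topological_space \<times> 'b::topological_space \<Rightarrow> 'c::metric_space"
  assumes qf: "\<And>x. quasicont (\<lambda>y. f (x, y))"
    and dD: "\<And>x. dense_set (D x)"
    and qD: "\<And>x y. y \<in> D x \<Longrightarrow> quasicont_at (\<lambda>x'. f (x', y)) x"
    and p: "open p" and e: "e > 0"
  shows "dense_set (good_set f p e)"
proof -
  let ?A = "fibre_small f p (e/4)"
  have "W \<inter> good_set f p e \<noteq> {}" if W: "open W" "W \<noteq> {}" for W
  proof (cases "W \<subseteq> closure ?A \<and> p \<noteq> {}")
    case False
    moreover have "p = {} \<Longrightarrow> locally_small f p e = UNIV"
      unfolding locally_small_def small_on_def by auto
    ultimately show ?thesis using W unfolding good_set_def by auto
  next
    case True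
    then obtain x0 where x0: "x0 \<in> W" "x0 \<in> ?A" using open_in_closure_meets W by blast
    obtain y1 where y1: "y1 \<in> p" "y1 \<in> D x0" using dense_set_meets[OF dD p] True by blast
    obtain Q where Q: "open Q" "Q \<noteq> {}" "Q \<subseteq> W"
        "\<And>x. x \<in> Q \<Longrightarrow> dist (f (x, y1)) (f (x0, y1)) < e/4"
      using qD[OF y1(2)] W(1) x0(1) by (rule quasicont_atE[where e="e/4"]) (use e in auto)
    have on_A: "dist (f (x, z)) (f (x0, y1)) \<le> e/2" if "x \<in> Q" "x \<in> ?A" "z \<in> p" for x z
    proof -
      have "dist (f (x, z)) (f (x, y1)) \<le> e/4"
        using that y1(1) unfolding fibre_small_def small_on_def by blast
      then show ?thesis using Q(4)[OF that(1)] dist_triangle[of "f (x, z)" "f (x0, y1)" "f (x, y1)"]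
        by linarith
    qed
    have "Q \<subseteq> closure ?A" using Q(3) True by blast
    then have "small_on f Q p e"
      using bound_from_dense_part[OF qf dD qD p Q(1) _ on_A] by (intro small_on_centre) simp
    then have "Q \<subseteq> locally_small f p e" using Q(1) unfolding locally_small_def by blast
    then show ?thesis using Q(2,3) unfolding good_set_def by blast
  qed
  from this[of "- closure (good_set f p e)"]
  have "- closure (good_set f p e) = {}" using closure_subset by auto
  then show ?thesis unfolding dense_set_def by blast
qed

text \<open>The residual set: for every p in a countable family of open sets, at points
  of R a fibre oscillation of at most e/8 on p forces oscillation at most e on a
  neighbourhood times p.  Density of the rationals lets one intersect only
  countably many good sets.\<close>
lemma residual_fibre_small_imp_locally_small:
  fixes f :: "'a::topological_space \<times> 'b::topological_space \<Rightarrow> 'c::metric_space"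
  assumes qf: "\<And>x. quasicont (\<lambda>y. f (x, y))"
    and dD: "\<And>x. dense_set (D x)"
    and qD: "\<And>x y. y \<in> D x \<Longrightarrow> quasicont_at (\<lambda>x'. f (x', y)) x"
    and P: "countable P" "\<And>p. p \<in> P \<Longrightarrow> open p"
  obtains R where "residual R"
    "\<And>x p e. x \<in> R \<Longrightarrow> p \<in> P \<Longrightarrow> e > 0 \<Longrightarrow> small_on f {x} p (e/8) \<Longrightarrow>
       \<exists>U. open U \<and> x \<in> U \<and> small_on f U p e"
proof
  define \<G> where "\<G> = (\<lambda>(p, r). good_set f p r) ` (P \<times> (\<rat> \<inter> {0<..}))"
  have "countable (P \<times> (\<rat> \<inter> {0<..}))"
    using P(1) countable_rat by (intro countable_SIGMA countable_Int1)
  then have "countable \<G>" unfolding \<G>_def by (rule countable_image)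
  moreover have "\<forall>G\<in>\<G>. open G \<and> dense_set G"
    unfolding \<G>_def using open_good_set dense_good_set[OF qf dD qD P(2)] by auto
  ultimately show "residual (\<Inter>\<G>)" unfolding residual_def by blast
  fix x p e assume x: "x \<in> \<Inter>\<G>" and p: "p \<in> P" and "e > 0" and small: "small_on f {x} p (e/8)"
  obtain r where r: "r \<in> \<rat>" "e/2 < r" "r < e"
    using Rats_dense_in_real[of "e/2" e] \<open>e > 0\<close> by auto
  then have "good_set f p r \<in> \<G>" unfolding \<G>_def using p \<open>e > 0\<close>
    by (intro image_eqI[of _ _ "(p, r)"]) auto
  then have "x \<in> good_set f p r" using x by blast
  moreover have "x \<in> fibre_small f p (r/4)"
    using small_on_mono[OF small, of "r/4"] r(2) unfolding fibre_small_def by simp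
  then have "x \<in> closure (fibre_small f p (r/4))" using closure_subset by blast
  ultimately obtain U where "open U" "x \<in> U" "small_on f U p r"
    unfolding good_set_def locally_small_def by blast
  then show "\<exists>U. open U \<and> x \<in> U \<and> small_on f U p e"
    using small_on_mono[of f U p r e] r(3) by auto
qed

lemma continuous_imp_quasicont:
  assumes "continuous_on UNIV g"
  shows "quasicont g"
  unfolding quasicont_def quasicont_at_def
proof (intro allI impI)
  fix a U W assume "open U \<and> a \<in> U \<and> open W \<and> g a \<in> W"
  moreover from this have "open (g -` W)" using open_vimage assms by blast
  ultimately show "\<exists>Q. open Q \<and> Q \<noteq> {} \<and> Q \<subseteq> U \<and> g ` Q \<subseteq> W"
    by (intro exI[of _ "U \<inter> g -` W"]) auto
qed

lemma joint_continuity_residual: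
  fixes f :: "'a::topological_space \<times> 'b::topological_space \<Rightarrow> 'c::metric_space"
    and B :: "'b set set"
  assumes B: "countable B" "topological_basis B"
    and cont: "\<And>x. continuous_on UNIV (\<lambda>y. f (x, y))"
    and dD: "\<And>x. dense_set (D x)"
    and qD: "\<And>x y. y \<in> D x \<Longrightarrow> quasicont_at (\<lambda>x'. f (x', y)) x"
  shows "\<exists>R. residual R \<and> (\<forall>x\<in>R. \<forall>y. (f \<longlongrightarrow> f (x, y)) (at (x, y)))"
proof -
  have Bo: "\<And>b. b \<in> B \<Longrightarrow> open b" using B(2) topological_basis_open by blast
  obtain R where R: "residual R"
    "\<And>x p e. x \<in> R \<Longrightarrow> p \<in> B \<Longrightarrow> e > 0 \<Longrightarrow> small_on f {x} p (e/8) \<Longrightarrow>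
       \<exists>U. open U \<and> x \<in> U \<and> small_on f U p e"
    using residual_fibre_small_imp_locally_small[of f D B, OF continuous_imp_quasicont[OF cont]
        dD qD B(1) Bo] by blast
  have "(f \<longlongrightarrow> f (x, y)) (at (x, y))" if x: "x \<in> R" for x y
    unfolding tendsto_iff
  proof (intro allI impI)
    fix \<epsilon> :: real assume "\<epsilon> > 0"
    let ?N = "(\<lambda>v. f (x, v)) -` ball (f (x, y)) (\<epsilon>/32)"
    have "open ?N" using open_vimage[OF open_ball cont] .
    moreover have "y \<in> ?N" using \<open>\<epsilon> > 0\<close> by simp
    ultimately obtain b where "b \<in> B" "y \<in> b" "b \<subseteq> ?N"
      by (rule topological_basisE[OF B(2)])
    then have b: "b \<in> B" "y \<in> b" "\<And>z. z \<in> b \<Longrightarrow> dist (f (x, z)) (f (x, y)) < \<epsilon>/32"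
      by (auto simp: dist_commute)
    have "small_on f {x} b (\<epsilon>/2/8)"
      using b(3) by (intro small_on_centre[where c = "f (x, y)"]) (auto simp: less_imp_le)
    then obtain U where U: "open U" "x \<in> U" "small_on f U b (\<epsilon>/2)"
      using R(2)[OF x b(1), of "\<epsilon>/2"] \<open>\<epsilon> > 0\<close> by auto
    have "dist (f q) (f (x, y)) < \<epsilon>" if "q \<in> U \<times> b" for q
    proof -
      have "dist (f q) (f (x, y)) \<le> \<epsilon>/2"
        using U(2,3) b(2) that unfolding small_on_def by (cases q) blast
      with \<open>\<epsilon> > 0\<close> show ?thesis by linarith
    qed
    then show "\<forall>\<^sub>F q in at (x, y). dist (f q) (f (x, y)) < \<epsilon>"
      unfolding eventually_at_topological using U(1,2) b(1,2) Bo
      by (intro exI[of _ "U \<times> b"]) (auto simp: open_Times)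
  qed
  then show ?thesis using R(1) by blast
qed

lemma quasicont_wrt_x_residual:
  fixes f :: "'a::topological_space \<times> 'b::topological_space \<Rightarrow> 'c::metric_space"
    and P :: "'b set set"
  assumes P: "countable P" "pseudobase P"
    and qf: "\<And>x. quasicont (\<lambda>y. f (x, y))"
    and dD: "\<And>x. dense_set (D x)"
    and qD: "\<And>x y. y \<in> D x \<Longrightarrow> quasicont_at (\<lambda>x'. f (x', y)) x"
  shows "\<exists>R. residual R \<and> (\<forall>x\<in>R. \<forall>y. quasicont_wrt_x f x y)"
proof -
  have Po: "\<And>p. p \<in> P \<Longrightarrow> open p \<and> p \<noteq> {}" using P(2) unfolding pseudobase_def by blast
  obtain R where R: "residual R"
    "\<And>x p e. x \<in> R \<Longrightarrow> p \<in> P \<Longrightarrow> e > 0 \<Longrightarrow> small_on f {x} p (e/8) \<Longrightarrow>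
       \<exists>U. open U \<and> x \<in> U \<and> small_on f U p e"
    using residual_fibre_small_imp_locally_small[of f D P, OF qf dD qD P(1)] Po by blast
  have "quasicont_wrt_x f x y" if x: "x \<in> R" for x y
    unfolding quasicont_wrt_x_def
  proof (intro allI impI)
    fix V \<epsilon> assume V: "open V \<and> y \<in> V \<and> (\<epsilon>::real) > 0"
    then obtain Q where Q: "open Q" "Q \<noteq> {}" "Q \<subseteq> V"
        "\<And>z. z \<in> Q \<Longrightarrow> dist (f (x, z)) (f (x, y)) < \<epsilon>/32"
      using quasicont_atE[of "\<lambda>v. f (x, v)" y V "\<epsilon>/32"] qf unfolding quasicont_def by auto
    then obtain p where p: "p \<in> P" "p \<subseteq> Q" using P(2) unfolding pseudobase_def by blast
    obtain z0 where z0: "z0 \<in> p" using Po[OF p(1)] by blast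
    have "small_on f {x} p (\<epsilon>/2/8)"
      using Q(4) p(2) by (intro small_on_centre[where c = "f (x, y)"]) (auto simp: less_imp_le)
    then obtain U where U: "open U" "x \<in> U" "small_on f U p (\<epsilon>/2)"
      using R(2)[OF x p(1), of "\<epsilon>/2"] V by auto
    have "dist (f (x, y)) (f (x', y')) \<le> \<epsilon>" if "x' \<in> U" "y' \<in> p" for x' y'
    proof -
      have "dist (f (x, z0)) (f (x', y')) \<le> \<epsilon>/2" using U that z0 unfolding small_on_def by blast
      moreover have "dist (f (x, z0)) (f (x, y)) < \<epsilon>/32" using Q(4) p(2) z0 by blast
      ultimately show ?thesis using dist_triangle3[of "f (x, y)" "f (x', y')" "f (x, z0)"] V by linarith
    qed
    then show "\<exists>U Q. open U \<and> x \<in> U \<and> open Q \<and> Q \<noteq> {} \<and> Q \<subseteq> V \<and>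
               (\<forall>x'\<in>U. \<forall>y'\<in>Q. dist (f (x, y)) (f (x', y')) \<le> \<epsilon>)"
      using U(1,2) Po[OF p(1)] p(2) Q(3) by blast
  qed
  then show ?thesis using R(1) by blast
qed

theorem corollary3p7:
  fixes f :: "'a::topological_space \<times> 'b::topological_space \<Rightarrow> 'c::metric_space"
  shows
   "((\<exists>B::'b set set. countable B \<and> topological_basis B) \<and>
     (\<forall>x. continuous_on UNIV (\<lambda>y. f (x, y)) \<and>
          (\<exists>D. dense_set D \<and> (\<forall>y\<in>D. quasicont_at (\<lambda>x'. f (x', y)) x)))
     \<longrightarrow> (\<exists>R. residual R \<and> (\<forall>x\<in>R. \<forall>y. (f \<longlongrightarrow> f (x, y)) (at (x, y)))))
    \<and>
    ((\<exists>P::'b set set. countable P \<and> pseudobase P) \<and>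
     (\<forall>x. quasicont (\<lambda>y. f (x, y)) \<and>
          (\<exists>D. dense_set D \<and> (\<forall>y\<in>D. quasicont_at (\<lambda>x'. f (x', y)) x)))
     \<longrightarrow> (\<exists>R. residual R \<and> (\<forall>x\<in>R. \<forall>y. quasicont_wrt_x f x y)))"
proof (intro conjI impI)
  assume H: "(\<exists>B::'b set set. countable B \<and> topological_basis B) \<and>
     (\<forall>x. continuous_on UNIV (\<lambda>y. f (x, y)) \<and>
          (\<exists>D. dense_set D \<and> (\<forall>y\<in>D. quasicont_at (\<lambda>x'. f (x', y)) x)))"
  then obtain B :: "'b set set" where B: "countable B" "topological_basis B" by blast
  from H obtain D where D: "\<forall>x. dense_set (D x) \<and> (\<forall>y\<in>D x. quasicont_at (\<lambda>x'. f (x', y)) x)"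
    using choice[of "\<lambda>x D. dense_set D \<and> (\<forall>y\<in>D. quasicont_at (\<lambda>x'. f (x', y)) x)"] by blast
  show "\<exists>R. residual R \<and> (\<forall>x\<in>R. \<forall>y. (f \<longlongrightarrow> f (x, y)) (at (x, y)))"
    using H D by (intro joint_continuity_residual[OF B, where D = D]) auto
next
  assume H: "(\<exists>P::'b set set. countable P \<and> pseudobase P) \<and>
     (\<forall>x. quasicont (\<lambda>y. f (x, y)) \<and>
          (\<exists>D. dense_set D \<and> (\<forall>y\<in>D. quasicont_at (\<lambda>x'. f (x', y)) x)))"
  then obtain P :: "'b set set" where P: "countable P" "pseudobase P" by blast
  from H obtain D where D: "\<forall>x. dense_set (D x) \<and> (\<forall>y\<in>D x. quasicont_at (\<lambda>x'. f (x', y)) x)"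
    using choice[of "\<lambda>x D. dense_set D \<and> (\<forall>y\<in>D. quasicont_at (\<lambda>x'. f (x', y)) x)"] by blast
  show "\<exists>R. residual R \<and> (\<forall>x\<in>R. \<forall>y. quasicont_wrt_x f x y)"
    using H D by (intro quasicont_wrt_x_residual[OF P, where D = D]) auto
qed

end
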